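(* Let $N\ge1$, $K\ge1$, $n_v\ge0$, and assume the row-stochastic matrix $\mathbf{T}\in[0,1]^{K\times K}$ is irreducible and aperiodic. Let $X(\cdot)$ be the probabilistic cellular automaton on $[K]^N$ with local transition matrix $\mathbf{T}$ and global transition matrix $\mathbf{P}$. Then $X(\cdot)$ is irreducible, aperiodic, and hence ergodic. In particular, there exists a unique stationary distribution $\pi$ on $[K]^N$, all states are positive recurrent, $\lim_{t\to\infty}\mathbb{P}(X(t)=\cdot)=\pi(\cdot)$, and there exist $C\in(0,\infty)$, $\rho\in(0,1)$ and $t_0\in\mathbb{N}$ such that $\|\mathbf{P}^t(x,\cdot)-\pi\|_{TV}\le C\rho^t$ for all $t\ge t_0$ and all $x\in[K]^N$, where $\|\cdot\|_{TV}:=\|\cdot\|_1$.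
   Context: Vertices $[N]=\{1,\dots,N\}$ are arranged on a cycle; for $n\in[N]$, $V_n\subset[N]$ is the set of residues modulo $N$ of $n-n_v,\dots,n+n_v$, and $|V_n|$ its cardinality. The probabilistic cellular automaton is the Markov chain $X(t)=(X_1(t),\dots,X_N(t))$ on $[K]^N$ with transition matrix $\mathbf{P}(x,y)=\prod_{n=1}^N \frac{1}{|V_n|}\sum_{i\in V_n}\mathbf{T}_{x_i,y_n}$. Here $\|\mu\|_1=\sum_{y}|\mu(y)|$. *)

theory Defs
  imports Complex_Main "HOL-Library.FuncSet"
begin

text \<open>Matrices over a finite index set I are functions 'a => 'a => real.
  mpow A I t is the t-th matrix power of A restricted to I.\<close>
fun mpow :: "('a \<Rightarrow> 'a \<Rightarrow> real) \<Rightarrow> 'a set \<Rightarrow> nat \<Rightarrow> 'a \<Rightarrow> 'a \<Rightarrow> real" where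
  "mpow A I 0 i j = (if i = j then 1 else 0)"
| "mpow A I (Suc t) i j = (\<Sum>k\<in>I. mpow A I t i k * A k j)"

definition row_stochastic :: "('a \<Rightarrow> 'a \<Rightarrow> real) \<Rightarrow> 'a set \<Rightarrow> bool" where
  "row_stochastic A I \<longleftrightarrow> (\<forall>i\<in>I. \<forall>j\<in>I. 0 \<le> A i j \<and> A i j \<le> 1) \<and> (\<forall>i\<in>I. (\<Sum>j\<in>I. A i j) = 1)"

definition irreducible_mat :: "('a \<Rightarrow> 'a \<Rightarrow> real) \<Rightarrow> 'a set \<Rightarrow> bool" where
  "irreducible_mat A I \<longleftrightarrow> (\<forall>i\<in>I. \<forall>j\<in>I. \<exists>t. mpow A I t i j > 0)"

definition period :: "('a \<Rightarrow> 'a \<Rightarrow> real) \<Rightarrow> 'a set \<Rightarrow> 'a \<Rightarrow> nat" where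
  "period A I i = Gcd {t. t > 0 \<and> mpow A I t i i > 0}"

definition aperiodic_mat :: "('a \<Rightarrow> 'a \<Rightarrow> real) \<Rightarrow> 'a set \<Rightarrow> bool" where
  "aperiodic_mat A I \<longleftrightarrow> (\<forall>i\<in>I. period A I i = 1)"

text \<open>Taboo probabilities: probability, starting at i, to be at j at time t
  without having visited i at times 1..t.\<close>
fun taboo :: "('a \<Rightarrow> 'a \<Rightarrow> real) \<Rightarrow> 'a set \<Rightarrow> 'a \<Rightarrow> nat \<Rightarrow> 'a \<Rightarrow> real" where
  "taboo A I i 0 j = (if j = i then 1 else 0)"
| "taboo A I i (Suc t) j = (if j = i then 0 else (\<Sum>k\<in>I. taboo A I i t k * A k j))"

definition first_return :: "('a \<Rightarrow> 'a \<Rightarrow> real) \<Rightarrow> 'a set \<Rightarrow> 'a \<Rightarrow> nat \<Rightarrow> real" where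
  "first_return A I i t = (if t = 0 then 0 else (\<Sum>k\<in>I. taboo A I i (t - 1) k * A k i))"

text \<open>Positive recurrence: return is certain and the expected return time is finite.\<close>
definition positive_recurrent :: "('a \<Rightarrow> 'a \<Rightarrow> real) \<Rightarrow> 'a set \<Rightarrow> 'a \<Rightarrow> bool" where
  "positive_recurrent A I i \<longleftrightarrow>
     first_return A I i sums 1 \<and> summable (\<lambda>t. real t * first_return A I i t)"

definition prob_dist :: "('a \<Rightarrow> real) \<Rightarrow> 'a set \<Rightarrow> bool" where
  "prob_dist \<mu> I \<longleftrightarrow> (\<forall>x\<in>I. 0 \<le> \<mu> x) \<and> (\<Sum>x\<in>I. \<mu> x) = 1"

definition stationary :: "('a \<Rightarrow> 'a \<Rightarrow> real) \<Rightarrow> 'a set \<Rightarrow> ('a \<Rightarrow> real) \<Rightarrow> bool" where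
  "stationary A I \<pi> \<longleftrightarrow> prob_dist \<pi> I \<and> (\<forall>y\<in>I. (\<Sum>x\<in>I. \<pi> x * A x y) = \<pi> y)"

text \<open>Neighbourhood V_n: residues mod N of n-nv,...,n+nv, represented in {1..N}.\<close>
definition nbhd :: "nat \<Rightarrow> nat \<Rightarrow> nat \<Rightarrow> nat set" where
  "nbhd N nv n = {nat ((int n + j - 1) mod int N + 1) | j. - int nv \<le> j \<and> j \<le> int nv}"

text \<open>State space [K]^N: configurations x : {1..N} -> {1..K} (extensional).\<close>
definition states :: "nat \<Rightarrow> nat \<Rightarrow> (nat \<Rightarrow> nat) set" where
  "states N K = ({1..N} \<rightarrow>\<^sub>E {1..K})"

definition pca_P :: "nat \<Rightarrow> nat \<Rightarrow> (nat \<Rightarrow> nat \<Rightarrow> real) \<Rightarrow> (nat \<Rightarrow> nat) \<Rightarrow> (nat \<Rightarrow> nat) \<Rightarrow> real" where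
  "pca_P N nv T x y = (\<Prod>n\<in>{1..N}. (1 / real (card (nbhd N nv n))) * (\<Sum>i\<in>nbhd N nv n. T (x i) (y n)))"

end

(* Every site of the automaton belongs to its own neighbourhood, so keeping only the own-site term
   gives P(x,y) >= c * prod_n T(x_n, y_n) with c = prod_n 1/|V_n| > 0, and hence
   P^t(x,y) >= c^t * prod_n T^t(x_n, y_n).  An irreducible aperiodic T is primitive (T^t > 0 for all
   large t: the return times to a state form an additive semigroup of gcd 1, which contains all
   large integers), so P is primitive as well.  A primitive stochastic matrix satisfies Doeblin's
   condition P^m >= delta > 0 entrywise, which makes mu |-> mu P^m a strict contraction in l1 on
   signed measures of total mass zero.  This yields geometric convergence of every initial law to a
   limit, which is the unique stationary distribution, and a geometrically decaying probability of
   not having returned to a state, whence positive recurrence. *)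

theory Submission
  imports Defs
begin

lemma mpow_add:
  assumes "finite I" "y \<in> I"
  shows "mpow A I (s + t) x y = (\<Sum>k\<in>I. mpow A I s x k * mpow A I t k y)"
  using assms(2)
proof (induction t arbitrary: y)
  case 0
  then show ?case using assms(1) by (simp add: if_distrib[of "\<lambda>c. _ * c"] cong: if_cong)
next
  case (Suc t)
  have "mpow A I (s + Suc t) x y = (\<Sum>k\<in>I. \<Sum>l\<in>I. mpow A I s x l * (mpow A I t l k * A k y))"
    using Suc.IH by (simp add: sum_distrib_right mult.assoc)
  also have "\<dots> = (\<Sum>l\<in>I. mpow A I s x l * (\<Sum>k\<in>I. mpow A I t l k * A k y))"
    unfolding sum_distrib_left by (rule sum.swap)
  finally show ?case by simp
qed

lemma mpow_nonneg:
  assumes "\<And>x y. x \<in> I \<Longrightarrow> y \<in> I \<Longrightarrow> 0 \<le> A x y" and "y \<in> I"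
  shows "0 \<le> mpow A I t x y"
  using assms(2) by (induction t arbitrary: y) (auto intro!: sum_nonneg mult_nonneg_nonneg assms(1))

lemma mpow_mono:
  assumes B_nonneg: "\<And>x y. x \<in> I \<Longrightarrow> y \<in> I \<Longrightarrow> 0 \<le> B x y"
    and B_le_A: "\<And>x y. x \<in> I \<Longrightarrow> y \<in> I \<Longrightarrow> B x y \<le> A x y" and "y \<in> I"
  shows "mpow B I t x y \<le> mpow A I t x y"
  using assms(3)
proof (induction t arbitrary: y)
  case (Suc t)
  have "mpow B I t x k * B k y \<le> mpow A I t x k * A k y" if "k \<in> I" for k
    using Suc.IH that Suc.prems mpow_nonneg[where A = B, OF B_nonneg that]
    by (intro mult_mono B_le_A B_nonneg) (auto intro: order_trans)
  then show ?case by (simp add: sum_mono)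
qed simp

lemma mpow_scale: "mpow (\<lambda>x y. c * A x y) I t x y = c ^ t * mpow A I t x y"
  by (induction t arbitrary: y) (simp_all add: sum_distrib_left mult_ac)

lemma mpow_tensor:
  assumes "finite I" "finite J" and x: "x \<in> Pi\<^sub>E I (\<lambda>_. J)" and "y \<in> Pi\<^sub>E I (\<lambda>_. J)"
  shows "mpow (\<lambda>x y. \<Prod>n\<in>I. B (x n) (y n)) (Pi\<^sub>E I (\<lambda>_. J)) t x y
    = (\<Prod>n\<in>I. mpow B J t (x n) (y n))"
  using assms(4)
proof (induction t arbitrary: y)
  case 0
  show ?case
  proof (cases "x = y")
    case False
    then obtain n where "n \<in> I" "x n \<noteq> y n" using x 0 PiE_ext by metis
    then show ?thesis using False assms(1) by (auto intro!: prod_zero)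
  qed simp
next
  case (Suc t)
  have "mpow (\<lambda>x y. \<Prod>n\<in>I. B (x n) (y n)) (Pi\<^sub>E I (\<lambda>_. J)) (Suc t) x y
      = (\<Sum>z\<in>Pi\<^sub>E I (\<lambda>_. J). \<Prod>n\<in>I. mpow B J t (x n) (z n) * B (z n) (y n))"
    using Suc.IH by (simp add: prod.distrib)
  also have "\<dots> = (\<Prod>n\<in>I. \<Sum>k\<in>J. mpow B J t (x n) k * B k (y n))"
    using assms(1,2) by (simp add: prod_sum_PiE)
  finally show ?case by simp
qed

section \<open>Additive semigroups of natural numbers\<close>

lemma add_closed_add_mult_mem:
  assumes "\<And>a b. a \<in> R \<Longrightarrow> b \<in> R \<Longrightarrow> a + b \<in> R" and "a \<in> R" "b \<in> R"
  shows "a + k * b \<in> (R :: nat set)"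
proof (induction k)
  case (Suc k)
  then show ?case using assms(1)[OF Suc assms(3)] by (simp add: algebra_simps)
qed (use assms in simp)

lemma add_closed_mult_mem:
  assumes "\<And>a b. a \<in> R \<Longrightarrow> b \<in> R \<Longrightarrow> a + b \<in> R" and "b \<in> R" "0 < k"
  shows "k * b \<in> (R :: nat set)"
  using add_closed_add_mult_mem[OF assms(1,2,2), of "k - 1"] \<open>0 < k\<close>
  by (simp add: mult_eq_if)

lemma eventually_mem_add_closed_Gcd_1:
  assumes closed: "\<And>a b. a \<in> R \<Longrightarrow> b \<in> R \<Longrightarrow> a + b \<in> R"
    and pos: "\<And>a. a \<in> R \<Longrightarrow> 0 < a"
    and Gcd_R: "Gcd R = (1 :: nat)"
  shows "\<forall>\<^sub>F n in sequentially. n \<in> R"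
proof -
  obtain a where a: "a \<in> R" using Gcd_R by fastforce
  define d where "d = (LEAST d. 0 < d \<and> (\<exists>b\<in>R. b + d \<in> R))"
  have "0 < d \<and> (\<exists>b\<in>R. b + d \<in> R)"
    unfolding d_def by (rule LeastI[of _ a]) (use a closed pos in blast)
  then obtain b where d_pos: "0 < d" and b: "b \<in> R" "b + d \<in> R" by blast
  have d_le: "d \<le> e" if "0 < e" "c \<in> R" "c + e \<in> R" for c e
    unfolding d_def by (rule Least_le) (use that in blast)
  \<comment> \<open>d is the smallest gap between elements of R, and every element is a multiple of it:
      otherwise the remainder of a modulo d would be a smaller gap.\<close>
  have d_dvd: "d dvd a" if a: "a \<in> R" for a
  proof (rule ccontr)
    define q r where "q = a div d" and "r = a mod d"
    assume "\<not> d dvd a"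
    then have r: "0 < r" "r < d" using d_pos unfolding r_def by (auto simp: mod_greater_zero_iff_not_dvd)
    have "a = q * d + r" unfolding q_def r_def by simp
    then have "(q + 1) * (b + d) + r = (a + q * b) + (b + d)" by (simp add: algebra_simps)
    also have "\<dots> \<in> R" using add_closed_add_mult_mem[OF closed a b(1)] closed b(2) by blast
    finally have "d \<le> r"
      using d_le r(1) add_closed_mult_mem[of R "b + d" "q + 1"] closed b(2) by simp
    with r(2) show False by simp
  qed
  have "d dvd Gcd R" by (rule Gcd_greatest) (rule d_dvd)
  then have "d = 1" using Gcd_R by simp
  then have b1: "b + 1 \<in> R" using b by simp
  have "n \<in> R" if n: "b * b \<le> n" for n
  proof -
    have b_pos: "0 < b" using pos[OF b(1)] .
    define q r where "q = n div b" and "r = n mod b"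
    have n_eq: "n = q * b + r" and "r < b" using b_pos unfolding q_def r_def by simp_all
    have "b \<le> q" using n b_pos unfolding q_def by (simp add: less_eq_div_iff_mult_less_eq)
    then have "n = (q - r) * b + r * (b + 1)" and "0 < q - r"
      using n_eq \<open>r < b\<close> by (simp_all add: algebra_simps diff_mult_distrib)
    moreover have "(q - r) * b + r * (b + 1) \<in> R"
      by (rule add_closed_add_mult_mem[OF closed add_closed_mult_mem[OF closed b(1) \<open>0 < q - r\<close>] b1])
    ultimately show ?thesis by simp
  qed
  then show ?thesis by (auto simp: eventually_sequentially)
qed

lemma power_div_le_geometric:
  fixes r :: real
  assumes "0 \<le> r" "r < 1" "0 < m"
  obtains C \<rho> where "0 < C" "0 < \<rho>" "\<rho> < 1" "\<And>t. r ^ (t div m) \<le> C * \<rho> ^ t"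
proof
  define r' where "r' = (1 + r) / 2"
  have r': "0 < r'" "r' < 1" "r \<le> r'" using assms unfolding r'_def by auto
  define \<rho> where "\<rho> = root m r'"
  have \<rho>: "0 < \<rho>" "\<rho> < 1" "\<rho> ^ m = r'" using r' assms unfolding \<rho>_def by auto
  show "0 < 1 / r'" "0 < \<rho>" "\<rho> < 1" using r' \<rho> by auto
  fix t
  have "r ^ (t div m) * r' \<le> \<rho> ^ (m * (t div m)) * \<rho> ^ m"
    using assms r' \<rho> by (auto simp: power_mult intro!: mult_mono power_mono)
  also have "\<dots> \<le> \<rho> ^ (m * (t div m)) * \<rho> ^ (t mod m)"
    using \<rho> assms by (intro mult_left_mono power_decreasing) auto
  also have "\<dots> = \<rho> ^ t" by (simp flip: power_add)
  finally show "r ^ (t div m) \<le> 1 / r' * \<rho> ^ t" using r' by (simp add: field_simps)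
qed

lemma summable_real_mult_power:
  fixes \<rho> :: real
  assumes "0 \<le> \<rho>" "\<rho> < 1"
  shows "summable (\<lambda>n. real n * \<rho> ^ n)"
proof -
  have "summable (\<lambda>n. diffs (\<lambda>_. 1) n * \<rho> ^ n)"
    by (rule termdiff_converges[of _ 1]) (use assms in \<open>auto intro: summable_geometric\<close>)
  then have "summable (\<lambda>n. real (Suc n) * \<rho> ^ n)" by (simp add: diffs_def)
  then show ?thesis
    by (rule summable_comparison_test[rotated]) (use assms in \<open>auto intro!: mult_right_mono\<close>)
qed

lemma convergent_if_summable_diff:
  fixes f :: "nat \<Rightarrow> 'a::banach"
  assumes "summable (\<lambda>n. f (Suc n) - f n)"
  shows "convergent f"
proof -
  have "convergent (\<lambda>n. f 0 + (\<Sum>k<n. f (Suc k) - f k))"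
    using assms by (intro convergent_add convergent_const) (simp add: summable_iff_convergent)
  then show ?thesis by (simp add: sum_lessThan_telescope)
qed

definition primitive_mat :: "('a \<Rightarrow> 'a \<Rightarrow> real) \<Rightarrow> 'a set \<Rightarrow> bool" where
  "primitive_mat A I \<longleftrightarrow> (\<forall>\<^sub>F t in sequentially. \<forall>x\<in>I. \<forall>y\<in>I. 0 < mpow A I t x y)"

lemma irreducible_if_primitive: "primitive_mat A I \<Longrightarrow> irreducible_mat A I"
  unfolding primitive_mat_def irreducible_mat_def eventually_sequentially by blast

lemma aperiodic_if_primitive:
  assumes "primitive_mat A I"
  shows "aperiodic_mat A I"
  unfolding aperiodic_mat_def period_def
proof
  fix x assume "x \<in> I"
  obtain t where t: "\<And>s. t \<le> s \<Longrightarrow> 0 < mpow A I s x x"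
    using assms \<open>x \<in> I\<close> unfolding primitive_mat_def eventually_sequentially by blast
  let ?R = "{s. 0 < s \<and> 0 < mpow A I s x x}"
  have "Gcd ?R dvd Suc t" "Gcd ?R dvd Suc (Suc t)"
    using t[of "Suc t"] t[of "Suc (Suc t)"] by (auto intro!: Gcd_dvd)
  then show "Gcd ?R = 1" using dvd_add_right_iff[of _ "Suc t" 1] by simp
qed

locale stochastic_matrix =
  fixes A :: "'a \<Rightarrow> 'a \<Rightarrow> real" and S :: "'a set"
  assumes finite_S: "finite S" and S_nonempty: "S \<noteq> {}"
    and nonneg: "\<And>x y. x \<in> S \<Longrightarrow> y \<in> S \<Longrightarrow> 0 \<le> A x y"
    and row_sum: "\<And>x. x \<in> S \<Longrightarrow> (\<Sum>y\<in>S. A x y) = 1"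
begin

lemma nonneg_mpow: "y \<in> S \<Longrightarrow> 0 \<le> mpow A S t x y"
  by (rule mpow_nonneg[OF nonneg])

lemma row_sum_mpow: "x \<in> S \<Longrightarrow> (\<Sum>y\<in>S. mpow A S t x y) = 1"
proof (induction t)
  case (Suc t)
  have "(\<Sum>y\<in>S. mpow A S (Suc t) x y) = (\<Sum>k\<in>S. mpow A S t x k * (\<Sum>y\<in>S. A k y))"
    unfolding mpow.simps sum_distrib_left by (rule sum.swap)
  then show ?case using Suc row_sum by simp
qed (use finite_S in simp)

lemma mpow_add_ge_mult:
  assumes "y \<in> S" "k \<in> S"
  shows "mpow A S s x k * mpow A S t k y \<le> mpow A S (s + t) x y"
  unfolding mpow_add[OF finite_S \<open>y \<in> S\<close>]
  using assms finite_S by (intro member_le_sum) (auto intro!: mult_nonneg_nonneg nonneg_mpow)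

lemma card_S_pos: "0 < card S"
  using finite_S S_nonempty by (simp add: card_gt_0_iff)

lemma eventually_mpow_diag_pos:
  assumes "aperiodic_mat A S" "x \<in> S"
  shows "\<forall>\<^sub>F t in sequentially. 0 < mpow A S t x x"
proof -
  let ?R = "{t. 0 < t \<and> 0 < mpow A S t x x}"
  have "s + t \<in> ?R" if "s \<in> ?R" "t \<in> ?R" for s t
    using that mpow_add_ge_mult[OF \<open>x \<in> S\<close> \<open>x \<in> S\<close>, of s x t]
    by (auto intro: order_less_le_trans[OF mult_pos_pos])
  moreover have "Gcd ?R = 1" using assms unfolding aperiodic_mat_def period_def by blast
  ultimately have "\<forall>\<^sub>F t in sequentially. t \<in> ?R"
    by (intro eventually_mem_add_closed_Gcd_1) auto
  then show ?thesis by eventually_elim simp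
qed

lemma primitive_if_irreducible_aperiodic:
  assumes irr: "irreducible_mat A S" and aper: "aperiodic_mat A S"
  shows "primitive_mat A S"
  unfolding primitive_mat_def
proof (intro eventually_ball_finite finite_S ballI)
  fix x y assume "x \<in> S" "y \<in> S"
  obtain s where s: "0 < mpow A S s x y" using irr \<open>x \<in> S\<close> \<open>y \<in> S\<close> unfolding irreducible_mat_def by blast
  obtain t0 where t0: "\<And>t. t0 \<le> t \<Longrightarrow> 0 < mpow A S t x x"
    using eventually_mpow_diag_pos[OF aper \<open>x \<in> S\<close>] unfolding eventually_sequentially by blast
  have "0 < mpow A S t x y" if "t0 + s \<le> t" for t
  proof -
    have "0 < mpow A S (t - s) x x * mpow A S s x y" using t0 that s by simp
    also have "\<dots> \<le> mpow A S (t - s + s) x y" by (rule mpow_add_ge_mult[OF \<open>y \<in> S\<close> \<open>x \<in> S\<close>])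
    finally show ?thesis using that by simp
  qed
  then show "\<forall>\<^sub>F t in sequentially. 0 < mpow A S t x y" unfolding eventually_sequentially by blast
qed

definition evolve :: "('a \<Rightarrow> real) \<Rightarrow> nat \<Rightarrow> 'a \<Rightarrow> real" where
  "evolve \<nu> t y = (\<Sum>z\<in>S. \<nu> z * mpow A S t z y)"

lemma evolve_0: "y \<in> S \<Longrightarrow> evolve \<nu> 0 y = \<nu> y"
  unfolding evolve_def using finite_S by (simp add: if_distrib[of "\<lambda>c. _ * c"] cong: if_cong)

lemma evolve_Suc: "evolve \<nu> (Suc t) y = (\<Sum>k\<in>S. evolve \<nu> t k * A k y)"
proof -
  have "evolve \<nu> (Suc t) y = (\<Sum>z\<in>S. \<Sum>k\<in>S. \<nu> z * mpow A S t z k * A k y)"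
    unfolding evolve_def by (simp add: sum_distrib_left mult.assoc)
  also have "\<dots> = (\<Sum>k\<in>S. evolve \<nu> t k * A k y)"
    unfolding evolve_def sum_distrib_right by (rule sum.swap)
  finally show ?thesis .
qed

lemma evolve_add: "y \<in> S \<Longrightarrow> evolve \<nu> (s + t) y = evolve (evolve \<nu> s) t y"
  by (induction t arbitrary: y) (simp_all add: evolve_0 evolve_Suc)

lemma evolve_indicator: "x \<in> S \<Longrightarrow> evolve (\<lambda>z. if z = x then 1 else 0) t y = mpow A S t x y"
  unfolding evolve_def using finite_S by (simp add: if_distrib[of "\<lambda>c. c * _"] cong: if_cong)

lemma evolve_diff: "evolve (\<lambda>z. \<nu> z - \<mu> z) t y = evolve \<nu> t y - evolve \<mu> t y"
  unfolding evolve_def by (simp add: left_diff_distrib sum_subtractf)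

lemma sum_evolve: "(\<Sum>y\<in>S. evolve \<nu> t y) = (\<Sum>z\<in>S. \<nu> z)"
proof -
  have "(\<Sum>y\<in>S. evolve \<nu> t y) = (\<Sum>z\<in>S. \<nu> z * (\<Sum>y\<in>S. mpow A S t z y))"
    unfolding evolve_def sum_distrib_left by (rule sum.swap)
  then show ?thesis by (simp add: row_sum_mpow)
qed

lemma l1_evolve_le: "(\<Sum>y\<in>S. \<bar>evolve \<nu> t y\<bar>) \<le> (\<Sum>z\<in>S. \<bar>\<nu> z\<bar>)"
proof -
  have "(\<Sum>y\<in>S. \<bar>evolve \<nu> t y\<bar>) \<le> (\<Sum>y\<in>S. \<Sum>z\<in>S. \<bar>\<nu> z\<bar> * mpow A S t z y)"
    unfolding evolve_def
    by (intro sum_mono order_trans[OF sum_abs]) (simp add: abs_mult nonneg_mpow)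
  also have "\<dots> = (\<Sum>z\<in>S. \<bar>\<nu> z\<bar> * (\<Sum>y\<in>S. mpow A S t z y))"
    unfolding sum_distrib_left by (rule sum.swap)
  also have "\<dots> = (\<Sum>z\<in>S. \<bar>\<nu> z\<bar>)" by (simp add: row_sum_mpow)
  finally show ?thesis .
qed

lemma prob_dist_evolve: "prob_dist \<mu> S \<Longrightarrow> prob_dist (evolve \<mu> t) S"
  unfolding prob_dist_def evolve_def using sum_evolve[of \<mu> t, unfolded evolve_def]
  by (auto intro!: sum_nonneg mult_nonneg_nonneg nonneg_mpow)

lemma prob_dist_indicator: "x \<in> S \<Longrightarrow> prob_dist (\<lambda>z. if z = x then 1 else 0) S"
  unfolding prob_dist_def using finite_S by simp

lemma evolve_stationary: "stationary A S \<pi> \<Longrightarrow> y \<in> S \<Longrightarrow> evolve \<pi> t y = \<pi> y"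
  unfolding stationary_def by (induction t arbitrary: y) (simp_all add: evolve_0 evolve_Suc)

end

section \<open>Doeblin's condition\<close>

locale doeblin = stochastic_matrix +
  fixes m :: nat and \<delta> :: real
  assumes m_pos: "0 < m" and \<delta>_pos: "0 < \<delta>"
    and minorization: "\<And>x y. x \<in> S \<Longrightarrow> y \<in> S \<Longrightarrow> \<delta> \<le> mpow A S m x y"
begin

lemma card_mult_\<delta>_le_1: "real (card S) * \<delta> \<le> 1"
proof -
  obtain x where "x \<in> S" using S_nonempty by blast
  have "(\<Sum>y\<in>S. \<delta>) \<le> (\<Sum>y\<in>S. mpow A S m x y)"
    using minorization[OF \<open>x \<in> S\<close>] by (intro sum_mono) auto
  then show ?thesis using row_sum_mpow[OF \<open>x \<in> S\<close>] by simp
qed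

lemma \<delta>_le_1: "\<delta> \<le> 1"
proof -
  have "1 * \<delta> \<le> real (card S) * \<delta>"
    using card_S_pos \<delta>_pos by (intro mult_right_mono) auto
  then show ?thesis using card_mult_\<delta>_le_1 by simp
qed

lemma l1_evolve_m_le:
  assumes zero_sum: "(\<Sum>z\<in>S. \<nu> z) = 0"
  shows "(\<Sum>y\<in>S. \<bar>evolve \<nu> m y\<bar>) \<le> (1 - real (card S) * \<delta>) * (\<Sum>z\<in>S. \<bar>\<nu> z\<bar>)"
proof -
  \<comment> \<open>A signed measure of mass zero does not see the constant part \<delta> of the rows of A^m.\<close>
  have "evolve \<nu> m y = (\<Sum>z\<in>S. \<nu> z * (mpow A S m z y - \<delta>))" for y
    using zero_sum unfolding evolve_def
    by (simp add: right_diff_distrib sum_subtractf sum_distrib_right[symmetric])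
  moreover have "\<bar>\<Sum>z\<in>S. \<nu> z * (mpow A S m z y - \<delta>)\<bar> \<le> (\<Sum>z\<in>S. \<bar>\<nu> z\<bar> * (mpow A S m z y - \<delta>))"
    if "y \<in> S" for y
    using minorization[OF _ that] by (intro order_trans[OF sum_abs] sum_mono) (simp add: abs_mult)
  ultimately have "(\<Sum>y\<in>S. \<bar>evolve \<nu> m y\<bar>) \<le> (\<Sum>y\<in>S. \<Sum>z\<in>S. \<bar>\<nu> z\<bar> * (mpow A S m z y - \<delta>))"
    by (simp add: sum_mono)
  also have "\<dots> = (\<Sum>z\<in>S. \<Sum>y\<in>S. \<bar>\<nu> z\<bar> * (mpow A S m z y - \<delta>))"
    by (rule sum.swap)
  also have "\<dots> = (\<Sum>z\<in>S. \<bar>\<nu> z\<bar> * ((\<Sum>y\<in>S. mpow A S m z y) - real (card S) * \<delta>))"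
    by (simp add: sum_distrib_left[symmetric] sum_subtractf)
  also have "\<dots> = (1 - real (card S) * \<delta>) * (\<Sum>z\<in>S. \<bar>\<nu> z\<bar>)"
    by (simp add: row_sum_mpow sum_distrib_right[symmetric] mult.commute)
  finally show ?thesis .
qed

lemma l1_evolve_le_power_div:
  assumes zero_sum: "(\<Sum>z\<in>S. \<nu> z) = 0"
  shows "(\<Sum>y\<in>S. \<bar>evolve \<nu> t y\<bar>) \<le> (1 - real (card S) * \<delta>) ^ (t div m) * (\<Sum>z\<in>S. \<bar>\<nu> z\<bar>)"
proof -
  let ?r = "1 - real (card S) * \<delta>"
  have "(\<Sum>y\<in>S. \<bar>evolve \<nu> (q * m + s) y\<bar>) \<le> ?r ^ q * (\<Sum>z\<in>S. \<bar>\<nu> z\<bar>)" for q s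
  proof (induction q)
    case (Suc q)
    have "(\<Sum>y\<in>S. \<bar>evolve \<nu> (Suc q * m + s) y\<bar>) = (\<Sum>y\<in>S. \<bar>evolve (evolve \<nu> (q * m + s)) m y\<bar>)"
      using evolve_add[of _ \<nu> "q * m + s" m] by (intro sum.cong) (simp_all add: algebra_simps)
    also have "\<dots> \<le> ?r * (\<Sum>y\<in>S. \<bar>evolve \<nu> (q * m + s) y\<bar>)"
      by (rule l1_evolve_m_le) (simp add: sum_evolve zero_sum)
    also have "\<dots> \<le> ?r * (?r ^ q * (\<Sum>z\<in>S. \<bar>\<nu> z\<bar>))"
      using Suc card_mult_\<delta>_le_1 by (intro mult_left_mono) auto
    finally show ?case by simp
  qed (simp add: l1_evolve_le)
  from this[of "t div m" "t mod m"] show ?thesis by simp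
qed

lemma l1_prob_dist_diff_le_2:
  assumes "prob_dist \<mu> S" "prob_dist \<mu>' S"
  shows "(\<Sum>z\<in>S. \<bar>\<mu> z - \<mu>' z\<bar>) \<le> 2"
proof -
  have "(\<Sum>z\<in>S. \<bar>\<mu> z - \<mu>' z\<bar>) \<le> (\<Sum>z\<in>S. \<mu> z + \<mu>' z)"
    using assms unfolding prob_dist_def by (intro sum_mono) (auto simp: abs_le_iff)
  then show ?thesis using assms unfolding prob_dist_def by (simp add: sum.distrib)
qed

lemma l1_evolve_diff_geometric:
  obtains C \<rho> where "0 < C" "0 < \<rho>" "\<rho> < 1"
    "\<And>\<mu> \<mu>' t. prob_dist \<mu> S \<Longrightarrow> prob_dist \<mu>' S \<Longrightarrow>
       (\<Sum>y\<in>S. \<bar>evolve \<mu> t y - evolve \<mu>' t y\<bar>) \<le> C * \<rho> ^ t"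
proof -
  obtain C \<rho> where C: "0 < C" "0 < \<rho>" "\<rho> < 1"
    and decay: "\<And>t. (1 - real (card S) * \<delta>) ^ (t div m) \<le> C * \<rho> ^ t"
    by (rule power_div_le_geometric[of "1 - real (card S) * \<delta>" m])
      (use card_mult_\<delta>_le_1 card_S_pos \<delta>_pos m_pos in auto)
  show ?thesis
  proof (rule that[of "2 * C" \<rho>])
    fix \<mu> \<mu>' :: "'a \<Rightarrow> real" and t
    assume \<mu>: "prob_dist \<mu> S" "prob_dist \<mu>' S"
    have "(\<Sum>z\<in>S. \<mu> z - \<mu>' z) = 0" using \<mu> by (simp add: prob_dist_def sum_subtractf)
    then have "(\<Sum>y\<in>S. \<bar>evolve \<mu> t y - evolve \<mu>' t y\<bar>)
        \<le> (1 - real (card S) * \<delta>) ^ (t div m) * (\<Sum>z\<in>S. \<bar>\<mu> z - \<mu>' z\<bar>)"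
      unfolding evolve_diff[symmetric] by (rule l1_evolve_le_power_div)
    also have "\<dots> \<le> C * \<rho> ^ t * 2"
      using decay l1_prob_dist_diff_le_2[OF \<mu>] card_mult_\<delta>_le_1 C
      by (intro mult_mono) (auto intro: sum_nonneg)
    finally show "(\<Sum>y\<in>S. \<bar>evolve \<mu> t y - evolve \<mu>' t y\<bar>) \<le> 2 * C * \<rho> ^ t"
      by (simp add: mult_ac)
  qed (use C in auto)
qed

lemma evolve_diff_tendsto_0:
  assumes "prob_dist \<mu> S" "prob_dist \<mu>' S" "y \<in> S"
  shows "(\<lambda>t. evolve \<mu> t y - evolve \<mu>' t y) \<longlonglongrightarrow> 0"
proof -
  obtain C \<rho> where C: "0 < C" "0 < \<rho>" "\<rho> < 1"
    and merge: "\<And>\<mu> \<mu>' t. prob_dist \<mu> S \<Longrightarrow> prob_dist \<mu>' S \<Longrightarrow>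
       (\<Sum>y\<in>S. \<bar>evolve \<mu> t y - evolve \<mu>' t y\<bar>) \<le> C * \<rho> ^ t"
    using l1_evolve_diff_geometric by blast
  have "norm (evolve \<mu> t y - evolve \<mu>' t y) \<le> norm (C * \<rho> ^ t) * 1" for t
    using member_le_sum[OF assms(3), of "\<lambda>y. \<bar>evolve \<mu> t y - evolve \<mu>' t y\<bar>"] finite_S
      merge[OF assms(1,2), of t] C
    by simp
  moreover have "(\<lambda>t. C * \<rho> ^ t) \<longlonglongrightarrow> 0"
    using C by (intro tendsto_mult_right_zero LIMSEQ_power_zero) auto
  ultimately show ?thesis by (blast intro: tendsto_0_le always_eventually)
qed

text \<open>Any starting state gives the same limit, see \<open>evolve_tendsto_limit_dist\<close>.\<close>

definition limit_dist :: "'a \<Rightarrow> real" where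
  "limit_dist y = lim (\<lambda>t. mpow A S t (SOME x. x \<in> S) y)"

lemma evolve_tendsto_limit_dist:
  assumes \<mu>: "prob_dist \<mu> S" and "y \<in> S"
  shows "(\<lambda>t. evolve \<mu> t y) \<longlonglongrightarrow> limit_dist y"
proof -
  define x0 where "x0 = (SOME x. x \<in> S)"
  have "x0 \<in> S" unfolding x0_def using S_nonempty by (simp add: some_in_eq)
  define \<iota> where "\<iota> = (\<lambda>z. if z = x0 then 1 else 0 :: real)"
  have \<iota>: "prob_dist \<iota> S" "evolve \<iota> t y = mpow A S t x0 y" for t
    unfolding \<iota>_def using \<open>x0 \<in> S\<close> by (simp_all add: prob_dist_indicator evolve_indicator)
  obtain C \<rho> where C: "0 < C" "0 < \<rho>" "\<rho> < 1"
    and merge: "\<And>\<mu> \<mu>' t. prob_dist \<mu> S \<Longrightarrow> prob_dist \<mu>' S \<Longrightarrow>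
       (\<Sum>y\<in>S. \<bar>evolve \<mu> t y - evolve \<mu>' t y\<bar>) \<le> C * \<rho> ^ t"
    using l1_evolve_diff_geometric by blast
  \<comment> \<open>Consecutive terms compare the chain started in \<iota> A with the one started in \<iota>.\<close>
  have step: "\<bar>evolve \<iota> (Suc t) y - evolve \<iota> t y\<bar> \<le> C * \<rho> ^ t" for t
  proof -
    have "\<bar>evolve \<iota> (Suc t) y - evolve \<iota> t y\<bar> = \<bar>evolve (evolve \<iota> 1) t y - evolve \<iota> t y\<bar>"
      using evolve_add[OF \<open>y \<in> S\<close>, of \<iota> 1 t] by simp
    also have "\<dots> \<le> (\<Sum>y\<in>S. \<bar>evolve (evolve \<iota> 1) t y - evolve \<iota> t y\<bar>)"
      using \<open>y \<in> S\<close> finite_S by (intro member_le_sum) auto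
    also have "\<dots> \<le> C * \<rho> ^ t" by (intro merge prob_dist_evolve \<iota>)
    finally show ?thesis .
  qed
  have "summable (\<lambda>t. C * \<rho> ^ t)" using C by (simp add: summable_geometric)
  then have "summable (\<lambda>t. evolve \<iota> (Suc t) y - evolve \<iota> t y)"
    by (rule summable_comparison_test') (simp add: step)
  then have "convergent (\<lambda>t. evolve \<iota> t y)" by (rule convergent_if_summable_diff)
  then have "(\<lambda>t. evolve \<iota> t y) \<longlonglongrightarrow> limit_dist y"
    unfolding convergent_LIMSEQ_iff \<iota>(2) limit_dist_def x0_def .
  then show ?thesis
    using evolve_diff_tendsto_0[OF \<mu> \<iota>(1) \<open>y \<in> S\<close>] by (rule Lim_transform)
qed

lemma stationary_limit_dist: "stationary A S limit_dist"
proof -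
  obtain x where "x \<in> S" using S_nonempty by blast
  define \<iota> where "\<iota> = (\<lambda>z. if z = x then 1 else 0 :: real)"
  have \<iota>: "prob_dist \<iota> S" unfolding \<iota>_def using \<open>x \<in> S\<close> by (rule prob_dist_indicator)
  note lim = evolve_tendsto_limit_dist[OF \<iota>]
  have sum_lim: "(\<lambda>t. \<Sum>y\<in>S. evolve \<iota> t y) \<longlonglongrightarrow> (\<Sum>y\<in>S. limit_dist y)"
    by (intro tendsto_sum lim)
  have "0 \<le> limit_dist y" if "y \<in> S" for y
    using lim[OF that] prob_dist_evolve[OF \<iota>] that
    by (intro LIMSEQ_le_const[of _ _ 0]) (auto simp: prob_dist_def)
  moreover have "(\<Sum>y\<in>S. limit_dist y) = 1"
    using sum_lim prob_dist_evolve[OF \<iota>] by (simp add: prob_dist_def LIMSEQ_const_iff)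
  moreover have "(\<Sum>x\<in>S. limit_dist x * A x y) = limit_dist y" if "y \<in> S" for y
  proof (rule LIMSEQ_unique)
    show "(\<lambda>t. evolve \<iota> (Suc t) y) \<longlonglongrightarrow> limit_dist y" using lim[OF that] by (rule LIMSEQ_Suc)
    show "(\<lambda>t. evolve \<iota> (Suc t) y) \<longlonglongrightarrow> (\<Sum>x\<in>S. limit_dist x * A x y)"
      unfolding evolve_Suc using lim by (intro tendsto_sum tendsto_mult_right) auto
  qed
  ultimately show ?thesis unfolding stationary_def prob_dist_def by blast
qed

lemma stationary_unique:
  assumes "stationary A S \<pi>" "x \<in> S"
  shows "\<pi> x = limit_dist x"
proof -
  have "(\<lambda>t. evolve \<pi> t x) \<longlonglongrightarrow> limit_dist x"
    using assms by (intro evolve_tendsto_limit_dist) (auto simp: stationary_def)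
  then show ?thesis using evolve_stationary[OF assms] by (simp add: LIMSEQ_const_iff)
qed

lemma mpow_limit_dist_geometric:
  obtains C \<rho> where "0 < C" "0 < \<rho>" "\<rho> < 1"
    "\<And>x t. x \<in> S \<Longrightarrow> (\<Sum>y\<in>S. \<bar>mpow A S t x y - limit_dist y\<bar>) \<le> C * \<rho> ^ t"
proof -
  obtain C \<rho> where C: "0 < C" "0 < \<rho>" "\<rho> < 1"
    and merge: "\<And>\<mu> \<mu>' t. prob_dist \<mu> S \<Longrightarrow> prob_dist \<mu>' S \<Longrightarrow>
       (\<Sum>y\<in>S. \<bar>evolve \<mu> t y - evolve \<mu>' t y\<bar>) \<le> C * \<rho> ^ t"
    using l1_evolve_diff_geometric by blast
  have "(\<Sum>y\<in>S. \<bar>mpow A S t x y - limit_dist y\<bar>) \<le> C * \<rho> ^ t" if "x \<in> S" for x t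
    using merge[OF prob_dist_indicator[OF that] stationary_limit_dist[unfolded stationary_def, THEN conjunct1]]
    by (simp add: evolve_indicator[OF that] evolve_stationary[OF stationary_limit_dist])
  with C that show ?thesis by blast
qed

subsection \<open>Positive recurrence\<close>

definition no_return_prob :: "'a \<Rightarrow> nat \<Rightarrow> real" where
  "no_return_prob i t = (\<Sum>j\<in>S. taboo A S i t j)"

lemma taboo_nonneg: "j \<in> S \<Longrightarrow> 0 \<le> taboo A S i t j"
  by (induction t arbitrary: j) (auto intro!: sum_nonneg mult_nonneg_nonneg nonneg)

lemma first_return_nonneg: "i \<in> S \<Longrightarrow> 0 \<le> first_return A S i t"
  unfolding first_return_def by (auto intro!: sum_nonneg mult_nonneg_nonneg nonneg taboo_nonneg)

lemma no_return_prob_nonneg: "0 \<le> no_return_prob i t"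
  unfolding no_return_prob_def by (auto intro!: sum_nonneg taboo_nonneg)

lemma no_return_prob_0: "i \<in> S \<Longrightarrow> no_return_prob i 0 = 1"
  unfolding no_return_prob_def using finite_S by simp

lemma no_return_prob_Suc:
  assumes "i \<in> S"
  shows "no_return_prob i (Suc t) = no_return_prob i t - first_return A S i (Suc t)"
proof -
  define g where "g j = (\<Sum>k\<in>S. taboo A S i t k * A k j)" for j
  have "(\<Sum>j\<in>S. g j) = (\<Sum>k\<in>S. taboo A S i t k * (\<Sum>j\<in>S. A k j))"
    unfolding g_def sum_distrib_left by (rule sum.swap)
  then have "(\<Sum>j\<in>S. g j) = no_return_prob i t"
    unfolding no_return_prob_def by (simp add: row_sum)
  moreover have "no_return_prob i (Suc t) = (\<Sum>j\<in>S. g j - (if j = i then g j else 0))"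
    unfolding no_return_prob_def g_def by (intro sum.cong) auto
  ultimately show ?thesis
    using assms finite_S by (simp add: sum_subtractf first_return_def g_def)
qed

lemma no_return_prob_le_1:
  assumes "i \<in> S"
  shows "no_return_prob i t \<le> 1"
proof (induction t)
  case (Suc t)
  then show ?case using first_return_nonneg[OF assms, of "Suc t"] by (simp add: no_return_prob_Suc assms)
qed (simp add: no_return_prob_0 assms)

lemma taboo_le_evolve: "j \<in> S \<Longrightarrow> taboo A S i (t + s) j \<le> evolve (taboo A S i t) s j"
proof (induction s arbitrary: j)
  case (Suc s)
  have "taboo A S i (t + Suc s) j \<le> (\<Sum>k\<in>S. taboo A S i (t + s) k * A k j)"
    using Suc.prems by (auto intro!: sum_nonneg mult_nonneg_nonneg taboo_nonneg nonneg)
  also have "\<dots> \<le> (\<Sum>k\<in>S. evolve (taboo A S i t) s k * A k j)"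
    using Suc by (intro sum_mono mult_right_mono nonneg) auto
  finally show ?case by (simp add: evolve_Suc)
qed (simp add: evolve_0)

lemma no_return_prob_add_m_le:
  assumes "i \<in> S"
  shows "no_return_prob i (t + m) \<le> (1 - \<delta>) * no_return_prob i t"
proof -
  let ?v = "evolve (taboo A S i t) m"
  \<comment> \<open>Running the mass that has not returned by time t for m \<ge> 1 more steps puts at least
      the fraction \<delta> of it on i, where it counts as returned.\<close>
  obtain m' where "m = Suc m'" using m_pos by (cases m) auto
  have "taboo A S i (t + m) j \<le> ?v j - (if j = i then ?v j else 0)" if "j \<in> S" for j
  proof (cases "j = i")
    case True
    then show ?thesis using \<open>m = Suc m'\<close> by simp
  next
    case False
    then show ?thesis using taboo_le_evolve[OF that, of i t m] by simp
  qed
  then have "no_return_prob i (t + m) \<le> (\<Sum>j\<in>S. ?v j - (if j = i then ?v j else 0))"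
    unfolding no_return_prob_def by (rule sum_mono)
  also have "\<dots> = (\<Sum>j\<in>S. ?v j) - ?v i"
    using assms finite_S by (simp add: sum_subtractf)
  also have "(\<Sum>j\<in>S. ?v j) = no_return_prob i t"
    unfolding no_return_prob_def by (rule sum_evolve)
  also have "\<delta> * no_return_prob i t \<le> ?v i"
    unfolding no_return_prob_def evolve_def sum_distrib_left
    using minorization assms by (intro sum_mono) (simp add: mult.commute mult_right_mono taboo_nonneg)
  then have "no_return_prob i t - ?v i \<le> (1 - \<delta>) * no_return_prob i t"
    by (simp add: algebra_simps)
  finally show ?thesis .
qed

lemma no_return_prob_le_power_div:
  assumes "i \<in> S"
  shows "no_return_prob i t \<le> (1 - \<delta>) ^ (t div m)"
proof -
  have "no_return_prob i (q * m + s) \<le> (1 - \<delta>) ^ q" for q s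
  proof (induction q)
    case (Suc q)
    have "no_return_prob i (Suc q * m + s) \<le> (1 - \<delta>) * no_return_prob i (q * m + s)"
      using no_return_prob_add_m_le[OF assms, of "q * m + s"] by (simp add: algebra_simps)
    also have "\<dots> \<le> (1 - \<delta>) * (1 - \<delta>) ^ q"
      using Suc \<delta>_le_1 by (intro mult_left_mono) auto
    finally show ?case by simp
  qed (simp add: no_return_prob_le_1 assms)
  from this[of "t div m" "t mod m"] show ?thesis by simp
qed

lemma no_return_prob_geometric:
  assumes "i \<in> S"
  obtains C \<rho> where "0 < C" "0 < \<rho>" "\<rho> < 1" "\<And>t. no_return_prob i t \<le> C * \<rho> ^ t"
proof -
  obtain C \<rho> where "0 < C" "0 < \<rho>" "\<rho> < 1" and decay: "\<And>t. (1 - \<delta>) ^ (t div m) \<le> C * \<rho> ^ t"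
    by (rule power_div_le_geometric[of "1 - \<delta>" m]) (use \<delta>_pos \<delta>_le_1 m_pos in auto)
  moreover have "no_return_prob i t \<le> C * \<rho> ^ t" for t
    using order_trans[OF no_return_prob_le_power_div[OF assms] decay] .
  ultimately show ?thesis using that by blast
qed

lemma first_return_sums_1:
  assumes "i \<in> S"
  shows "first_return A S i sums 1"
proof -
  obtain C \<rho> where C: "0 < C" "0 < \<rho>" "\<rho> < 1" and no_return: "\<And>t. no_return_prob i t \<le> C * \<rho> ^ t"
    using no_return_prob_geometric[OF assms] by blast
  have geometric: "(\<lambda>t. C * \<rho> ^ t) \<longlonglongrightarrow> 0"
    using C by (intro tendsto_mult_right_zero LIMSEQ_power_zero) auto
  have "no_return_prob i \<longlonglongrightarrow> 0"
    by (rule tendsto_sandwich[OF always_eventually always_eventually tendsto_const geometric])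
      (simp_all add: no_return_prob_nonneg no_return)
  from tendsto_diff[OF tendsto_const[of 1] this]
  have "(\<lambda>n. 1 - no_return_prob i n) \<longlonglongrightarrow> 1" by simp
  moreover have "(\<Sum>u<Suc n. first_return A S i u) = 1 - no_return_prob i n" for n
    by (induction n) (simp_all add: first_return_def no_return_prob_0 no_return_prob_Suc assms)
  ultimately have "(\<lambda>n. \<Sum>u<Suc n. first_return A S i u) \<longlonglongrightarrow> 1" by simp
  then show ?thesis unfolding sums_def by (rule LIMSEQ_imp_Suc)
qed

lemma summable_mult_first_return:
  assumes "i \<in> S"
  shows "summable (\<lambda>t. real t * first_return A S i t)"
proof -
  obtain C \<rho> where C: "0 < C" "0 < \<rho>" "\<rho> < 1" and no_return: "\<And>t. no_return_prob i t \<le> C * \<rho> ^ t"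
    using no_return_prob_geometric[OF assms] by blast
  \<comment> \<open>A first return at time k + 1 requires that no return happened up to time k.\<close>
  have bound: "first_return A S i t \<le> C / \<rho> * \<rho> ^ t" for t
  proof (cases t)
    case (Suc k)
    have "first_return A S i t \<le> no_return_prob i k"
      using no_return_prob_Suc[OF assms, of k] no_return_prob_nonneg[of i t] Suc by simp
    also have "\<dots> \<le> C / \<rho> * \<rho> ^ t" using no_return[of k] Suc C by simp
    finally show ?thesis .
  qed (simp add: first_return_def C less_imp_le)
  have "norm (real t * first_return A S i t) \<le> C / \<rho> * (real t * \<rho> ^ t)" for t
  proof -
    have "norm (real t * first_return A S i t) = real t * first_return A S i t"
      using first_return_nonneg[OF assms, of t] by simp
    also have "\<dots> \<le> real t * (C / \<rho> * \<rho> ^ t)" by (rule mult_left_mono[OF bound]) simp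
    finally show ?thesis by (simp add: mult_ac)
  qed
  moreover have "summable (\<lambda>t. C / \<rho> * (real t * \<rho> ^ t))"
    using C by (intro summable_mult summable_real_mult_power) auto
  ultimately show ?thesis by (rule summable_comparison_test'[rotated])
qed

lemma positive_recurrent: "i \<in> S \<Longrightarrow> positive_recurrent A S i"
  unfolding positive_recurrent_def using first_return_sums_1 summable_mult_first_return by blast

end

lemma (in stochastic_matrix) doeblin_if_primitive:
  assumes "primitive_mat A S"
  obtains m \<delta> where "doeblin A S m \<delta>"
proof -
  obtain N where N: "\<And>t. N \<le> t \<Longrightarrow> \<forall>x\<in>S. \<forall>y\<in>S. 0 < mpow A S t x y"
    using assms unfolding primitive_mat_def eventually_sequentially by blast
  define m where "m = Suc N"
  have "N \<le> m" unfolding m_def by simp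
  note mpow_m_pos = N[OF this]
  define \<delta> where "\<delta> = Min ((\<lambda>(x, y). mpow A S m x y) ` (S \<times> S))"
  have "0 < \<delta>" unfolding \<delta>_def using finite_S S_nonempty mpow_m_pos by auto
  moreover have "\<delta> \<le> mpow A S m x y" if "x \<in> S" "y \<in> S" for x y
    unfolding \<delta>_def using finite_S that by (intro Min_le) auto
  ultimately have "doeblin A S m \<delta>"
    by unfold_locales (auto simp: m_def intro: finite_S S_nonempty nonneg row_sum)
  then show ?thesis by (rule that)
qed

theorem (in stochastic_matrix) ergodic_if_primitive:
  assumes "primitive_mat A S"
  shows "irreducible_mat A S
    \<and> aperiodic_mat A S
    \<and> (\<exists>\<pi>. stationary A S \<pi>
          \<and> (\<forall>\<pi>'. stationary A S \<pi>' \<longrightarrow> (\<forall>x\<in>S. \<pi>' x = \<pi> x))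
          \<and> (\<forall>x\<in>S. positive_recurrent A S x)
          \<and> (\<forall>\<mu>. prob_dist \<mu> S \<longrightarrow>
               (\<forall>y\<in>S. (\<lambda>t. \<Sum>x\<in>S. \<mu> x * mpow A S t x y) \<longlonglongrightarrow> \<pi> y))
          \<and> (\<exists>C \<rho> t0. 0 < C \<and> 0 < \<rho> \<and> \<rho> < 1 \<and>
               (\<forall>t\<ge>t0. \<forall>x\<in>S. (\<Sum>y\<in>S. \<bar>mpow A S t x y - \<pi> y\<bar>) \<le> C * \<rho> ^ t)))"
proof -
  obtain m \<delta> where "doeblin A S m \<delta>" using doeblin_if_primitive[OF assms] .
  then interpret doeblin A S m \<delta> .
  obtain C \<rho> where "0 < C" "0 < \<rho>" "\<rho> < 1"
    "\<And>x t. x \<in> S \<Longrightarrow> (\<Sum>y\<in>S. \<bar>mpow A S t x y - limit_dist y\<bar>) \<le> C * \<rho> ^ t"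
    using mpow_limit_dist_geometric by blast
  then have "\<exists>C \<rho> t0. 0 < C \<and> 0 < \<rho> \<and> \<rho> < 1 \<and>
      (\<forall>t\<ge>t0. \<forall>x\<in>S. (\<Sum>y\<in>S. \<bar>mpow A S t x y - limit_dist y\<bar>) \<le> C * \<rho> ^ t)"
    by blast
  moreover have "\<forall>\<mu>. prob_dist \<mu> S \<longrightarrow>
      (\<forall>y\<in>S. (\<lambda>t. \<Sum>x\<in>S. \<mu> x * mpow A S t x y) \<longlonglongrightarrow> limit_dist y)"
    using evolve_tendsto_limit_dist unfolding evolve_def by blast
  moreover have "\<forall>\<pi>'. stationary A S \<pi>' \<longrightarrow> (\<forall>x\<in>S. \<pi>' x = limit_dist x)"
    using stationary_unique by blast
  ultimately show ?thesis
    using irreducible_if_primitive[OF assms] aperiodic_if_primitive[OF assms]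
      stationary_limit_dist positive_recurrent
    by blast
qed

section \<open>The probabilistic cellular automaton\<close>

lemma nbhd_eq_image: "nbhd N nv n = (\<lambda>j. nat ((int n + j - 1) mod int N + 1)) ` {- int nv..int nv}"
  unfolding nbhd_def by auto

lemma finite_nbhd: "finite (nbhd N nv n)"
  by (simp add: nbhd_eq_image)

lemma nbhd_subset:
  assumes "1 \<le> N"
  shows "nbhd N nv n \<subseteq> {1..N}"
proof
  fix i assume "i \<in> nbhd N nv n"
  then obtain j where "i = nat ((int n + j - 1) mod int N + 1)" unfolding nbhd_def by auto
  moreover have "0 \<le> (int n + j - 1) mod int N" "(int n + j - 1) mod int N < int N"
    using assms by auto
  ultimately show "i \<in> {1..N}" by auto
qed

lemma self_in_nbhd:
  assumes "n \<in> {1..N}"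
  shows "n \<in> nbhd N nv n"
proof -
  have "(int n - 1) mod int N = int n - 1" using assms by (intro mod_pos_pos_trivial) auto
  then have "n = nat ((int n + 0 - 1) mod int N + 1)" using assms by simp
  then show ?thesis unfolding nbhd_def by force
qed

lemma card_nbhd_pos: "n \<in> {1..N} \<Longrightarrow> 0 < card (nbhd N nv n)"
  using self_in_nbhd finite_nbhd by (metis card_gt_0_iff empty_iff)

lemma stochastic_matrix_if_row_stochastic:
  "finite I \<Longrightarrow> I \<noteq> {} \<Longrightarrow> row_stochastic A I \<Longrightarrow> stochastic_matrix A I"
  unfolding row_stochastic_def by unfold_locales auto

locale pca = stochastic_matrix T "{1..K}" for T :: "nat \<Rightarrow> nat \<Rightarrow> real" and K :: nat +
  fixes N nv :: nat
  assumes N_pos: "1 \<le> N"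
begin

lemma states_mem_nbhd:
  "x \<in> states N K \<Longrightarrow> n \<in> {1..N} \<Longrightarrow> i \<in> nbhd N nv n \<Longrightarrow> x i \<in> {1..K}"
  unfolding states_def using nbhd_subset[OF N_pos] by blast

lemma states_mem: "x \<in> states N K \<Longrightarrow> n \<in> {1..N} \<Longrightarrow> x n \<in> {1..K}"
  unfolding states_def by blast

sublocale P: stochastic_matrix "pca_P N nv T" "states N K"
proof
  show "finite (states N K)" unfolding states_def by (simp add: finite_PiE)
  show "states N K \<noteq> {}" unfolding states_def using S_nonempty by (simp add: PiE_eq_empty_iff)
  show "0 \<le> pca_P N nv T x y" if "x \<in> states N K" "y \<in> states N K" for x y
    unfolding pca_P_def using that states_mem_nbhd states_mem
    by (intro prod_nonneg mult_nonneg_nonneg sum_nonneg nonneg) auto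
  show "(\<Sum>y\<in>states N K. pca_P N nv T x y) = 1" if x: "x \<in> states N K" for x
  proof -
    have "(\<Sum>y\<in>states N K. pca_P N nv T x y)
        = (\<Prod>n\<in>{1..N}. \<Sum>k\<in>{1..K}. 1 / real (card (nbhd N nv n)) * (\<Sum>i\<in>nbhd N nv n. T (x i) k))"
      unfolding pca_P_def states_def by (rule prod_sum_PiE[symmetric]) auto
    also have "\<dots> = (\<Prod>n\<in>{1..N}. 1 / real (card (nbhd N nv n)) * (\<Sum>i\<in>nbhd N nv n. \<Sum>k\<in>{1..K}. T (x i) k))"
      unfolding sum_distrib_left[symmetric] by (subst sum.swap) (rule refl)
    also have "\<dots> = 1"
    proof (intro prod.neutral ballI)
      fix n assume n: "n \<in> {1..N}"
      have "(\<Sum>i\<in>nbhd N nv n. \<Sum>k\<in>{1..K}. T (x i) k) = (\<Sum>i\<in>nbhd N nv n. 1)"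
        by (intro sum.cong refl row_sum states_mem_nbhd[OF x n])
      then show "1 / real (card (nbhd N nv n)) * (\<Sum>i\<in>nbhd N nv n. \<Sum>k\<in>{1..K}. T (x i) k) = 1"
        using card_nbhd_pos[OF n] by simp
    qed
    finally show ?thesis .
  qed
qed

definition self_weight :: real where
  "self_weight = (\<Prod>n\<in>{1..N}. 1 / real (card (nbhd N nv n)))"

lemma self_weight_pos: "0 < self_weight"
  unfolding self_weight_def using card_nbhd_pos by (intro prod_pos) auto

lemma pca_P_ge_tensor:
  assumes x: "x \<in> states N K" and y: "y \<in> states N K"
  shows "self_weight * (\<Prod>n\<in>{1..N}. T (x n) (y n)) \<le> pca_P N nv T x y"
  unfolding self_weight_def pca_P_def prod.distrib[symmetric]
proof (intro prod_mono conjI)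
  fix n assume n: "n \<in> {1..N}"
  have "T (x n) (y n) \<le> (\<Sum>i\<in>nbhd N nv n. T (x i) (y n))"
    using n states_mem_nbhd[OF x n] states_mem[OF y n] finite_nbhd
    by (intro member_le_sum self_in_nbhd nonneg) auto
  then show "1 / real (card (nbhd N nv n)) * T (x n) (y n)
      \<le> 1 / real (card (nbhd N nv n)) * (\<Sum>i\<in>nbhd N nv n. T (x i) (y n))"
    by (rule mult_left_mono) simp
  show "0 \<le> 1 / real (card (nbhd N nv n)) * T (x n) (y n)"
    using states_mem[OF x n] states_mem[OF y n] by (simp add: nonneg)
qed

lemma pca_P_primitive:
  assumes "primitive_mat T {1..K}"
  shows "primitive_mat (pca_P N nv T) (states N K)"
  using assms unfolding primitive_mat_def
proof (rule eventually_mono, intro ballI)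
  fix t x y
  assume T_pos: "\<forall>i\<in>{1..K}. \<forall>j\<in>{1..K}. 0 < mpow T {1..K} t i j"
    and x: "x \<in> states N K" and y: "y \<in> states N K"
  define B where "B x y = self_weight * (\<Prod>n\<in>{1..N}. T (x n) (y n))" for x y
  have "0 < self_weight ^ t * (\<Prod>n\<in>{1..N}. mpow T {1..K} t (x n) (y n))"
    using self_weight_pos T_pos states_mem[OF x] states_mem[OF y]
    by (intro mult_pos_pos zero_less_power prod_pos) auto
  also have "\<dots> = mpow B (states N K) t x y"
    unfolding B_def mpow_scale states_def using x y
    by (subst mpow_tensor) (simp_all add: states_def)
  also have "\<dots> \<le> mpow (pca_P N nv T) (states N K) t x y"
    using y self_weight_pos states_mem pca_P_ge_tensor unfolding B_def
    by (intro mpow_mono) (auto intro!: mult_nonneg_nonneg prod_nonneg nonneg)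
  finally show "0 < mpow (pca_P N nv T) (states N K) t x y" .
qed

end

theorem theorem2p10:
  fixes N K nv :: nat and T :: "nat \<Rightarrow> nat \<Rightarrow> real"
  assumes "N \<ge> 1" and "K \<ge> 1"
    and "row_stochastic T {1..K}"
    and "irreducible_mat T {1..K}"
    and "aperiodic_mat T {1..K}"
  shows "irreducible_mat (pca_P N nv T) (states N K)
    \<and> aperiodic_mat (pca_P N nv T) (states N K)
    \<and> (\<exists>\<pi>. stationary (pca_P N nv T) (states N K) \<pi>
          \<and> (\<forall>\<pi>'. stationary (pca_P N nv T) (states N K) \<pi>' \<longrightarrow> (\<forall>x\<in>states N K. \<pi>' x = \<pi> x))
          \<and> (\<forall>x\<in>states N K. positive_recurrent (pca_P N nv T) (states N K) x)
          \<and> (\<forall>\<mu>. prob_dist \<mu> (states N K) \<longrightarrow>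
               (\<forall>y\<in>states N K. (\<lambda>t. \<Sum>x\<in>states N K. \<mu> x * mpow (pca_P N nv T) (states N K) t x y)
                    \<longlonglongrightarrow> \<pi> y))
          \<and> (\<exists>C \<rho> t0. 0 < C \<and> 0 < \<rho> \<and> \<rho> < 1 \<and>
               (\<forall>t\<ge>t0. \<forall>x\<in>states N K.
                  (\<Sum>y\<in>states N K. \<bar>mpow (pca_P N nv T) (states N K) t x y - \<pi> y\<bar>) \<le> C * \<rho> ^ t)))"
proof -
  have "stochastic_matrix T {1..K}"
    using assms(2,3) by (intro stochastic_matrix_if_row_stochastic) auto
  then interpret pca T K N nv
    using assms(1) by (simp add: pca_def pca_axioms_def)
  have "primitive_mat T {1..K}"
    using assms(4,5) by (rule primitive_if_irreducible_aperiodic)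
  then show ?thesis by (rule P.ergodic_if_primitive[OF pca_P_primitive])
qed

end
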